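(* In every bigroupoid $\mathcal B$, every formal diagram commutes; equivalently, any two canonical 2-cells (images under $J_b$ of 2-cells of $\mathcal F_b\mathcal B$) with the same source and target that arise as images of parallel 2-cells of $\mathcal F_b\mathcal B$ are equal, since every diagram of 2-cells in $\mathcal F_b\mathcal B$ commutes.
   Context: A graph consists of a set of nodes and sets of edges between pairs of nodes. A bigroupoid consists of a set of 0-cells, hom-groupoids $\mathcal B(A,B)$ (objects: 1-cells; arrows: 2-cells), composition functors $*$, identity 1-cells $1_A$, inversion functors $(-)^*$ and natural isomorphisms $\mathbf a:(h*g)*f\Rightarrow h*(g*f)$, $\mathbf l:1*f\Rightarrow f$, $\mathbf r:f*1\Rightarrow f$, $\mathbf e:f^**f\Rightarrow 1$, $\mathbf i:1\Rightarrow f*f^*$ satisfying the pentagon, $(\mathrm{id}*\mathbf l)\circ\mathbf a=\mathbf r*\mathrm{id}$, and $\mathbf r_f\circ(\mathrm{id}*\mathbf e_f)\circ\mathbf a\circ(\mathbf i_f*\mathrm{id})=\mathbf l_f$. A strict morphism preserves all structure on the nose. Every bigroupoid has an underlying graph (0-cells and 1-cells). For a graph $\mathcal G$, the free bigroupoid $\mathcal F_b\mathcal G$ comes with a graph morphism $I_b:\mathcal G\to\mathcal F_b\mathcal G$ such that for every bigroupoid $\mathcal B$ and graph morphism $F:\mathcal G\to\mathcal B$ there is a unique strict morphism $\widetilde F$ with $\widetilde FI_b=F$. For a bigroupoid $\mathcal B$, let $\mathcal F_b\mathcal B$ be the free bigroupoid on its underlying graph and $J_b:\mathcal F_b\mathcal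 B\to\mathcal B$ the unique strict morphism extending the identity of the underlying graph. A diagram of 2-cells in $\mathcal B$ is a formal diagram if it is the image under $J_b$ of a diagram of 2-cells in $\mathcal F_b\mathcal B$; a single 2-cell arising this way is called canonical. *)

theory Defs
  imports Main
begin

text \<open>Horizontal composition is written hc1 g f = g * f (f first, then g);
  vertical composition vc b a = b \<circ> a (a first, then b).\<close>

record ('o, 'b, 'c) bigrp =
  Ob   :: "'o set"
  Arr1 :: "'b set"
  s1   :: "'b \<Rightarrow> 'o"
  t1   :: "'b \<Rightarrow> 'o"
  Arr2 :: "'c set"
  d2   :: "'c \<Rightarrow> 'b"
  c2   :: "'c \<Rightarrow> 'b"
  vc   :: "'c \<Rightarrow> 'c \<Rightarrow> 'c"
  id2  :: "'b \<Rightarrow> 'c"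
  inv2 :: "'c \<Rightarrow> 'c"
  hc1  :: "'b \<Rightarrow> 'b \<Rightarrow> 'b"
  hc2  :: "'c \<Rightarrow> 'c \<Rightarrow> 'c"
  id1  :: "'o \<Rightarrow> 'b"
  st1  :: "'b \<Rightarrow> 'b"
  st2  :: "'c \<Rightarrow> 'c"
  aa   :: "'b \<Rightarrow> 'b \<Rightarrow> 'b \<Rightarrow> 'c"
  ll   :: "'b \<Rightarrow> 'c"
  rr   :: "'b \<Rightarrow> 'c"
  ee   :: "'b \<Rightarrow> 'c"
  ii   :: "'b \<Rightarrow> 'c"

locale bigroupoid =
  fixes B :: "('o, 'b, 'c) bigrp"
  assumes
    arr1_ends: "f \<in> Arr1 B \<Longrightarrow> s1 B f \<in> Ob B \<and> t1 B f \<in> Ob B"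
  and id1_arr: "A \<in> Ob B \<Longrightarrow> id1 B A \<in> Arr1 B \<and> s1 B (id1 B A) = A \<and> t1 B (id1 B A) = A"
  and hc1_arr: "\<lbrakk>f \<in> Arr1 B; g \<in> Arr1 B; t1 B f = s1 B g\<rbrakk> \<Longrightarrow>
        hc1 B g f \<in> Arr1 B \<and> s1 B (hc1 B g f) = s1 B f \<and> t1 B (hc1 B g f) = t1 B g"
  and st1_arr: "f \<in> Arr1 B \<Longrightarrow>
        st1 B f \<in> Arr1 B \<and> s1 B (st1 B f) = t1 B f \<and> t1 B (st1 B f) = s1 B f"
  and arr2_ends: "\<alpha> \<in> Arr2 B \<Longrightarrow> d2 B \<alpha> \<in> Arr1 B \<and> c2 B \<alpha> \<in> Arr1 B \<and>
        s1 B (d2 B \<alpha>) = s1 B (c2 B \<alpha>) \<and> t1 B (d2 B \<alpha>) = t1 B (c2 B \<alpha>)"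
  and id2_arr: "f \<in> Arr1 B \<Longrightarrow> id2 B f \<in> Arr2 B \<and> d2 B (id2 B f) = f \<and> c2 B (id2 B f) = f"
  and vc_arr: "\<lbrakk>\<alpha> \<in> Arr2 B; \<beta> \<in> Arr2 B; c2 B \<alpha> = d2 B \<beta>\<rbrakk> \<Longrightarrow>
        vc B \<beta> \<alpha> \<in> Arr2 B \<and> d2 B (vc B \<beta> \<alpha>) = d2 B \<alpha> \<and> c2 B (vc B \<beta> \<alpha>) = c2 B \<beta>"
  and vc_assoc: "\<lbrakk>\<alpha> \<in> Arr2 B; \<beta> \<in> Arr2 B; \<gamma> \<in> Arr2 B; c2 B \<alpha> = d2 B \<beta>; c2 B \<beta> = d2 B \<gamma>\<rbrakk> \<Longrightarrow>
        vc B \<gamma> (vc B \<beta> \<alpha>) = vc B (vc B \<gamma> \<beta>) \<alpha>"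
  and vc_idl: "\<alpha> \<in> Arr2 B \<Longrightarrow> vc B (id2 B (c2 B \<alpha>)) \<alpha> = \<alpha>"
  and vc_idr: "\<alpha> \<in> Arr2 B \<Longrightarrow> vc B \<alpha> (id2 B (d2 B \<alpha>)) = \<alpha>"
  and inv2_arr: "\<alpha> \<in> Arr2 B \<Longrightarrow> inv2 B \<alpha> \<in> Arr2 B \<and> d2 B (inv2 B \<alpha>) = c2 B \<alpha> \<and>
        c2 B (inv2 B \<alpha>) = d2 B \<alpha>"
  and inv2_l: "\<alpha> \<in> Arr2 B \<Longrightarrow> vc B (inv2 B \<alpha>) \<alpha> = id2 B (d2 B \<alpha>)"
  and inv2_r: "\<alpha> \<in> Arr2 B \<Longrightarrow> vc B \<alpha> (inv2 B \<alpha>) = id2 B (c2 B \<alpha>)"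
  and hc2_arr: "\<lbrakk>\<alpha> \<in> Arr2 B; \<beta> \<in> Arr2 B; t1 B (d2 B \<alpha>) = s1 B (d2 B \<beta>)\<rbrakk> \<Longrightarrow>
        hc2 B \<beta> \<alpha> \<in> Arr2 B \<and> d2 B (hc2 B \<beta> \<alpha>) = hc1 B (d2 B \<beta>) (d2 B \<alpha>) \<and>
        c2 B (hc2 B \<beta> \<alpha>) = hc1 B (c2 B \<beta>) (c2 B \<alpha>)"
  and hc2_id: "\<lbrakk>f \<in> Arr1 B; g \<in> Arr1 B; t1 B f = s1 B g\<rbrakk> \<Longrightarrow>
        hc2 B (id2 B g) (id2 B f) = id2 B (hc1 B g f)"
  and hc2_interchange: "\<lbrakk>\<alpha> \<in> Arr2 B; \<alpha>' \<in> Arr2 B; \<beta> \<in> Arr2 B; \<beta>' \<in> Arr2 B;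
        c2 B \<alpha> = d2 B \<alpha>'; c2 B \<beta> = d2 B \<beta>'; t1 B (d2 B \<alpha>) = s1 B (d2 B \<beta>)\<rbrakk> \<Longrightarrow>
        hc2 B (vc B \<beta>' \<beta>) (vc B \<alpha>' \<alpha>) = vc B (hc2 B \<beta>' \<alpha>') (hc2 B \<beta> \<alpha>)"
  and st2_arr: "\<alpha> \<in> Arr2 B \<Longrightarrow> st2 B \<alpha> \<in> Arr2 B \<and> d2 B (st2 B \<alpha>) = st1 B (d2 B \<alpha>) \<and>
        c2 B (st2 B \<alpha>) = st1 B (c2 B \<alpha>)"
  and st2_id: "f \<in> Arr1 B \<Longrightarrow> st2 B (id2 B f) = id2 B (st1 B f)"
  and st2_vc: "\<lbrakk>\<alpha> \<in> Arr2 B; \<beta> \<in> Arr2 B; c2 B \<alpha> = d2 B \<beta>\<rbrakk> \<Longrightarrow>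
        st2 B (vc B \<beta> \<alpha>) = vc B (st2 B \<beta>) (st2 B \<alpha>)"
  and aa_arr: "\<lbrakk>f \<in> Arr1 B; g \<in> Arr1 B; h \<in> Arr1 B; t1 B f = s1 B g; t1 B g = s1 B h\<rbrakk> \<Longrightarrow>
        aa B h g f \<in> Arr2 B \<and> d2 B (aa B h g f) = hc1 B (hc1 B h g) f \<and>
        c2 B (aa B h g f) = hc1 B h (hc1 B g f)"
  and aa_nat: "\<lbrakk>\<alpha> \<in> Arr2 B; \<beta> \<in> Arr2 B; \<gamma> \<in> Arr2 B;
        t1 B (d2 B \<alpha>) = s1 B (d2 B \<beta>); t1 B (d2 B \<beta>) = s1 B (d2 B \<gamma>)\<rbrakk> \<Longrightarrow>
        vc B (aa B (c2 B \<gamma>) (c2 B \<beta>) (c2 B \<alpha>)) (hc2 B (hc2 B \<gamma> \<beta>) \<alpha>) =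
        vc B (hc2 B \<gamma> (hc2 B \<beta> \<alpha>)) (aa B (d2 B \<gamma>) (d2 B \<beta>) (d2 B \<alpha>))"
  and ll_arr: "f \<in> Arr1 B \<Longrightarrow> ll B f \<in> Arr2 B \<and> d2 B (ll B f) = hc1 B (id1 B (t1 B f)) f \<and>
        c2 B (ll B f) = f"
  and ll_nat: "\<alpha> \<in> Arr2 B \<Longrightarrow>
        vc B (ll B (c2 B \<alpha>)) (hc2 B (id2 B (id1 B (t1 B (d2 B \<alpha>)))) \<alpha>) = vc B \<alpha> (ll B (d2 B \<alpha>))"
  and rr_arr: "f \<in> Arr1 B \<Longrightarrow> rr B f \<in> Arr2 B \<and> d2 B (rr B f) = hc1 B f (id1 B (s1 B f)) \<and>
        c2 B (rr B f) = f"
  and rr_nat: "\<alpha> \<in> Arr2 B \<Longrightarrow>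
        vc B (rr B (c2 B \<alpha>)) (hc2 B \<alpha> (id2 B (id1 B (s1 B (d2 B \<alpha>))))) = vc B \<alpha> (rr B (d2 B \<alpha>))"
  and ee_arr: "f \<in> Arr1 B \<Longrightarrow> ee B f \<in> Arr2 B \<and> d2 B (ee B f) = hc1 B (st1 B f) f \<and>
        c2 B (ee B f) = id1 B (s1 B f)"
  and ee_nat: "\<alpha> \<in> Arr2 B \<Longrightarrow>
        vc B (ee B (c2 B \<alpha>)) (hc2 B (st2 B \<alpha>) \<alpha>) =
        vc B (id2 B (id1 B (s1 B (d2 B \<alpha>)))) (ee B (d2 B \<alpha>))"
  and ii_arr: "f \<in> Arr1 B \<Longrightarrow> ii B f \<in> Arr2 B \<and> d2 B (ii B f) = id1 B (t1 B f) \<and>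
        c2 B (ii B f) = hc1 B f (st1 B f)"
  and ii_nat: "\<alpha> \<in> Arr2 B \<Longrightarrow>
        vc B (ii B (c2 B \<alpha>)) (id2 B (id1 B (t1 B (d2 B \<alpha>)))) =
        vc B (hc2 B \<alpha> (st2 B \<alpha>)) (ii B (d2 B \<alpha>))"
  and pentagon: "\<lbrakk>f \<in> Arr1 B; g \<in> Arr1 B; h \<in> Arr1 B; k \<in> Arr1 B;
        t1 B f = s1 B g; t1 B g = s1 B h; t1 B h = s1 B k\<rbrakk> \<Longrightarrow>
        vc B (aa B k h (hc1 B g f)) (aa B (hc1 B k h) g f) =
        vc B (hc2 B (id2 B k) (aa B h g f))
          (vc B (aa B k (hc1 B h g) f) (hc2 B (aa B k h g) (id2 B f)))"
  and triangle: "\<lbrakk>f \<in> Arr1 B; g \<in> Arr1 B; t1 B f = s1 B g\<rbrakk> \<Longrightarrow>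
        vc B (hc2 B (id2 B g) (ll B f)) (aa B g (id1 B (t1 B f)) f) = hc2 B (rr B g) (id2 B f)"
  and inverse_ax: "f \<in> Arr1 B \<Longrightarrow>
        vc B (rr B f) (vc B (hc2 B (id2 B f) (ee B f))
          (vc B (aa B f (st1 B f) f) (hc2 B (ii B f) (id2 B f)))) = ll B f"

text \<open>1-cells of F_b B: formal words over the underlying graph of B
  (nodes = 0-cells of B, edges = 1-cells of B).\<close>

datatype ('o, 'b) fw = FE 'b | FI 'o | FC "('o, 'b) fw" "('o, 'b) fw" | FS "('o, 'b) fw"

fun fsrc :: "('o, 'b, 'c) bigrp \<Rightarrow> ('o, 'b) fw \<Rightarrow> 'o"
and ftgt :: "('o, 'b, 'c) bigrp \<Rightarrow> ('o, 'b) fw \<Rightarrow> 'o" where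
  "fsrc B (FE f) = s1 B f"
| "fsrc B (FI A) = A"
| "fsrc B (FC g f) = fsrc B f"
| "fsrc B (FS f) = ftgt B f"
| "ftgt B (FE f) = t1 B f"
| "ftgt B (FI A) = A"
| "ftgt B (FC g f) = ftgt B g"
| "ftgt B (FS f) = fsrc B f"

fun fwf :: "('o, 'b, 'c) bigrp \<Rightarrow> ('o, 'b) fw \<Rightarrow> bool" where
  "fwf B (FE f) = (f \<in> Arr1 B)"
| "fwf B (FI A) = (A \<in> Ob B)"
| "fwf B (FC g f) = (fwf B g \<and> fwf B f \<and> ftgt B f = fsrc B g)"
| "fwf B (FS f) = fwf B f"

fun J1 :: "('o, 'b, 'c) bigrp \<Rightarrow> ('o, 'b) fw \<Rightarrow> 'b" where
  "J1 B (FE f) = f"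
| "J1 B (FI A) = id1 B A"
| "J1 B (FC g f) = hc1 B (J1 B g) (J1 B f)"
| "J1 B (FS f) = st1 B (J1 B f)"

text \<open>2-cells of F_b B are represented by formal 2-cell terms (the 2-cells of F_b B are
  equivalence classes of well-formed terms modulo the bigroupoid equations).\<close>

datatype ('o, 'b) ft =
    TId "('o, 'b) fw"
  | TV "('o, 'b) ft" "('o, 'b) ft"
  | TH "('o, 'b) ft" "('o, 'b) ft"
  | TInv "('o, 'b) ft"
  | TS "('o, 'b) ft"
  | TA "('o, 'b) fw" "('o, 'b) fw" "('o, 'b) fw"
  | TL "('o, 'b) fw"
  | TR "('o, 'b) fw"
  | TE "('o, 'b) fw"
  | TIo "('o, 'b) fw"

fun tdom :: "('o, 'b, 'c) bigrp \<Rightarrow> ('o, 'b) ft \<Rightarrow> ('o, 'b) fw"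
and tcod :: "('o, 'b, 'c) bigrp \<Rightarrow> ('o, 'b) ft \<Rightarrow> ('o, 'b) fw" where
  "tdom B (TId w) = w"
| "tdom B (TV b a) = tdom B a"
| "tdom B (TH b a) = FC (tdom B b) (tdom B a)"
| "tdom B (TInv a) = tcod B a"
| "tdom B (TS a) = FS (tdom B a)"
| "tdom B (TA h g f) = FC (FC h g) f"
| "tdom B (TL f) = FC (FI (ftgt B f)) f"
| "tdom B (TR f) = FC f (FI (fsrc B f))"
| "tdom B (TE f) = FC (FS f) f"
| "tdom B (TIo f) = FI (ftgt B f)"
| "tcod B (TId w) = w"
| "tcod B (TV b a) = tcod B b"
| "tcod B (TH b a) = FC (tcod B b) (tcod B a)"
| "tcod B (TInv a) = tdom B a"
| "tcod B (TS a) = FS (tcod B a)"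
| "tcod B (TA h g f) = FC h (FC g f)"
| "tcod B (TL f) = f"
| "tcod B (TR f) = f"
| "tcod B (TE f) = FI (fsrc B f)"
| "tcod B (TIo f) = FC f (FS f)"

fun twf :: "('o, 'b, 'c) bigrp \<Rightarrow> ('o, 'b) ft \<Rightarrow> bool" where
  "twf B (TId w) = fwf B w"
| "twf B (TV b a) = (twf B b \<and> twf B a \<and> tcod B a = tdom B b)"
| "twf B (TH b a) = (twf B b \<and> twf B a \<and> ftgt B (tdom B a) = fsrc B (tdom B b))"
| "twf B (TInv a) = twf B a"
| "twf B (TS a) = twf B a"
| "twf B (TA h g f) = (fwf B h \<and> fwf B g \<and> fwf B f \<and> ftgt B f = fsrc B g \<and> ftgt B g = fsrc B h)"
| "twf B (TL f) = fwf B f"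
| "twf B (TR f) = fwf B f"
| "twf B (TE f) = fwf B f"
| "twf B (TIo f) = fwf B f"

fun J2 :: "('o, 'b, 'c) bigrp \<Rightarrow> ('o, 'b) ft \<Rightarrow> 'c" where
  "J2 B (TId w) = id2 B (J1 B w)"
| "J2 B (TV b a) = vc B (J2 B b) (J2 B a)"
| "J2 B (TH b a) = hc2 B (J2 B b) (J2 B a)"
| "J2 B (TInv a) = inv2 B (J2 B a)"
| "J2 B (TS a) = st2 B (J2 B a)"
| "J2 B (TA h g f) = aa B (J1 B h) (J1 B g) (J1 B f)"
| "J2 B (TL f) = ll B (J1 B f)"
| "J2 B (TR f) = rr B (J1 B f)"
| "J2 B (TE f) = ee B (J1 B f)"
| "J2 B (TIo f) = ii B (J1 B f)"

end

theory Submission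
  imports Defs
begin

text \<open>
  A normalisation argument modelled on the Cayley representation of the free group. Formal
  1-cells act on reduced paths, i.e.\ reduced words in the 1-cells of \<open>B\<close> and their formal
  inverses, and parallel formal 1-cells act identically. For a formal 1-cell \<open>w\<close> and a reduced
  path \<open>r\<close> with composite \<open>P r\<close>, recursion on \<open>w\<close> yields a 2-cell
  \<open>reduce2 w r : J\<^sub>b w * P r \<Rightarrow> P (w\<cdot>r)\<close> built from structural 2-cells only. It is natural
  in \<open>w\<close>: for every formal 2-cell \<open>\<alpha> : w \<Rightarrow> w'\<close> we have
  \<open>reduce2 w' r \<circ> (J\<^sub>b \<alpha> * 1) = reduce2 w r\<close>; the generating cases are the pentagon, the
  triangle and the inverse axiom. Taking \<open>r\<close> empty, \<open>J\<^sub>b \<alpha> * 1\<close> depends only on the source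
  and target of \<open>\<alpha>\<close>, and whiskering by an identity is injective.
\<close>

context bigroupoid
begin

abbreviation vcomp (infixr "\<odot>" 55) where "b \<odot> a \<equiv> vc B b a"
abbreviation hcomp (infixr "\<star>" 60) where "b \<star> a \<equiv> hc2 B b a"
abbreviation hcomp1 (infixr "\<bullet>" 60) where "g \<bullet> f \<equiv> hc1 B g f"
abbreviation iota ("\<iota>") where "\<iota> f \<equiv> id2 B f"

lemma arr1_ends_Ob [simp]: "f \<in> Arr1 B \<Longrightarrow> s1 B f \<in> Ob B" "f \<in> Arr1 B \<Longrightarrow> t1 B f \<in> Ob B"
  using arr1_ends by blast+

lemma id1_simps [simp]:
  "A \<in> Ob B \<Longrightarrow> id1 B A \<in> Arr1 B" "A \<in> Ob B \<Longrightarrow> s1 B (id1 B A) = A"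
  "A \<in> Ob B \<Longrightarrow> t1 B (id1 B A) = A"
  using id1_arr by blast+

lemma hc1_simps [simp]:
  "\<lbrakk>f \<in> Arr1 B; g \<in> Arr1 B; t1 B f = s1 B g\<rbrakk> \<Longrightarrow> g \<bullet> f \<in> Arr1 B"
  "\<lbrakk>f \<in> Arr1 B; g \<in> Arr1 B; t1 B f = s1 B g\<rbrakk> \<Longrightarrow> s1 B (g \<bullet> f) = s1 B f"
  "\<lbrakk>f \<in> Arr1 B; g \<in> Arr1 B; t1 B f = s1 B g\<rbrakk> \<Longrightarrow> t1 B (g \<bullet> f) = t1 B g"
  using hc1_arr by blast+

lemma st1_simps [simp]:
  "f \<in> Arr1 B \<Longrightarrow> st1 B f \<in> Arr1 B" "f \<in> Arr1 B \<Longrightarrow> s1 B (st1 B f) = t1 B f"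
  "f \<in> Arr1 B \<Longrightarrow> t1 B (st1 B f) = s1 B f"
  using st1_arr by blast+

lemma arr2_simps [simp]:
  "a \<in> Arr2 B \<Longrightarrow> d2 B a \<in> Arr1 B" "a \<in> Arr2 B \<Longrightarrow> c2 B a \<in> Arr1 B"
  "a \<in> Arr2 B \<Longrightarrow> s1 B (c2 B a) = s1 B (d2 B a)" "a \<in> Arr2 B \<Longrightarrow> t1 B (c2 B a) = t1 B (d2 B a)"
  using arr2_ends by auto

lemma id2_simps [simp]:
  "f \<in> Arr1 B \<Longrightarrow> \<iota> f \<in> Arr2 B" "f \<in> Arr1 B \<Longrightarrow> d2 B (\<iota> f) = f" "f \<in> Arr1 B \<Longrightarrow> c2 B (\<iota> f) = f"
  using id2_arr by blast+

lemma vc_simps [simp]: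
  "\<lbrakk>a \<in> Arr2 B; b \<in> Arr2 B; c2 B a = d2 B b\<rbrakk> \<Longrightarrow> b \<odot> a \<in> Arr2 B"
  "\<lbrakk>a \<in> Arr2 B; b \<in> Arr2 B; c2 B a = d2 B b\<rbrakk> \<Longrightarrow> d2 B (b \<odot> a) = d2 B a"
  "\<lbrakk>a \<in> Arr2 B; b \<in> Arr2 B; c2 B a = d2 B b\<rbrakk> \<Longrightarrow> c2 B (b \<odot> a) = c2 B b"
  using vc_arr by blast+

lemma inv2_simps [simp]:
  "a \<in> Arr2 B \<Longrightarrow> inv2 B a \<in> Arr2 B" "a \<in> Arr2 B \<Longrightarrow> d2 B (inv2 B a) = c2 B a"
  "a \<in> Arr2 B \<Longrightarrow> c2 B (inv2 B a) = d2 B a"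
  using inv2_arr by blast+

lemma hc2_simps [simp]:
  "\<lbrakk>a \<in> Arr2 B; b \<in> Arr2 B; t1 B (d2 B a) = s1 B (d2 B b)\<rbrakk> \<Longrightarrow> b \<star> a \<in> Arr2 B"
  "\<lbrakk>a \<in> Arr2 B; b \<in> Arr2 B; t1 B (d2 B a) = s1 B (d2 B b)\<rbrakk> \<Longrightarrow> d2 B (b \<star> a) = d2 B b \<bullet> d2 B a"
  "\<lbrakk>a \<in> Arr2 B; b \<in> Arr2 B; t1 B (d2 B a) = s1 B (d2 B b)\<rbrakk> \<Longrightarrow> c2 B (b \<star> a) = c2 B b \<bullet> c2 B a"
  using hc2_arr by blast+

lemma st2_simps [simp]:
  "a \<in> Arr2 B \<Longrightarrow> st2 B a \<in> Arr2 B" "a \<in> Arr2 B \<Longrightarrow> d2 B (st2 B a) = st1 B (d2 B a)"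
  "a \<in> Arr2 B \<Longrightarrow> c2 B (st2 B a) = st1 B (c2 B a)"
  using st2_arr by blast+

lemma aa_simps [simp]:
  "\<lbrakk>f \<in> Arr1 B; g \<in> Arr1 B; h \<in> Arr1 B; t1 B f = s1 B g; t1 B g = s1 B h\<rbrakk> \<Longrightarrow> aa B h g f \<in> Arr2 B"
  "\<lbrakk>f \<in> Arr1 B; g \<in> Arr1 B; h \<in> Arr1 B; t1 B f = s1 B g; t1 B g = s1 B h\<rbrakk> \<Longrightarrow>
    d2 B (aa B h g f) = (h \<bullet> g) \<bullet> f"
  "\<lbrakk>f \<in> Arr1 B; g \<in> Arr1 B; h \<in> Arr1 B; t1 B f = s1 B g; t1 B g = s1 B h\<rbrakk> \<Longrightarrow>
    c2 B (aa B h g f) = h \<bullet> (g \<bullet> f)"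
  using aa_arr by blast+

lemma ll_simps [simp]:
  "f \<in> Arr1 B \<Longrightarrow> ll B f \<in> Arr2 B" "f \<in> Arr1 B \<Longrightarrow> d2 B (ll B f) = id1 B (t1 B f) \<bullet> f"
  "f \<in> Arr1 B \<Longrightarrow> c2 B (ll B f) = f"
  using ll_arr by blast+

lemma rr_simps [simp]:
  "f \<in> Arr1 B \<Longrightarrow> rr B f \<in> Arr2 B" "f \<in> Arr1 B \<Longrightarrow> d2 B (rr B f) = f \<bullet> id1 B (s1 B f)"
  "f \<in> Arr1 B \<Longrightarrow> c2 B (rr B f) = f"
  using rr_arr by blast+

lemma ee_simps [simp]:
  "f \<in> Arr1 B \<Longrightarrow> ee B f \<in> Arr2 B" "f \<in> Arr1 B \<Longrightarrow> d2 B (ee B f) = st1 B f \<bullet> f"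
  "f \<in> Arr1 B \<Longrightarrow> c2 B (ee B f) = id1 B (s1 B f)"
  using ee_arr by blast+

lemma ii_simps [simp]:
  "f \<in> Arr1 B \<Longrightarrow> ii B f \<in> Arr2 B" "f \<in> Arr1 B \<Longrightarrow> d2 B (ii B f) = id1 B (t1 B f)"
  "f \<in> Arr1 B \<Longrightarrow> c2 B (ii B f) = f \<bullet> st1 B f"
  using ii_arr by blast+

lemma vc_id2_left [simp]: "\<lbrakk>a \<in> Arr2 B; c2 B a = f\<rbrakk> \<Longrightarrow> \<iota> f \<odot> a = a"
  using vc_idl by blast

lemma vc_id2_right [simp]: "\<lbrakk>a \<in> Arr2 B; d2 B a = f\<rbrakk> \<Longrightarrow> a \<odot> \<iota> f = a"
  using vc_idr by blast

declare inv2_l [simp] inv2_r [simp] hc2_id [simp]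

lemma inv2_cancel [simp]:
  "\<lbrakk>a \<in> Arr2 B; b \<in> Arr2 B; c2 B a = d2 B b\<rbrakk> \<Longrightarrow> inv2 B b \<odot> (b \<odot> a) = a"
  "\<lbrakk>a \<in> Arr2 B; b \<in> Arr2 B; c2 B b = c2 B a\<rbrakk> \<Longrightarrow> a \<odot> (inv2 B a \<odot> b) = b"
  "\<lbrakk>a \<in> Arr2 B; b \<in> Arr2 B; d2 B a = d2 B b\<rbrakk> \<Longrightarrow> (b \<odot> inv2 B a) \<odot> a = b"
  "\<lbrakk>a \<in> Arr2 B; b \<in> Arr2 B; d2 B b = c2 B a\<rbrakk> \<Longrightarrow> (b \<odot> a) \<odot> inv2 B a = b"
  by (simp add: vc_assoc, simp add: vc_assoc, simp flip: vc_assoc, simp flip: vc_assoc)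

lemma inv2_unique:
  assumes "a \<in> Arr2 B" "b \<in> Arr2 B" "c2 B a = d2 B b" "b \<odot> a = \<iota> (d2 B a)"
  shows "b = inv2 B a"
proof -
  have "b = (b \<odot> a) \<odot> inv2 B a" using assms(1-3) by simp
  also have "\<dots> = inv2 B a" using assms by simp
  finally show ?thesis .
qed

lemma inv2_vc:
  assumes "a \<in> Arr2 B" "b \<in> Arr2 B" "c2 B a = d2 B b"
  shows "inv2 B (b \<odot> a) = inv2 B a \<odot> inv2 B b"
proof -
  have "(inv2 B a \<odot> inv2 B b) \<odot> (b \<odot> a) = \<iota> (d2 B (b \<odot> a))"
    using assms by (simp add: vc_assoc)
  then show ?thesis using assms by (intro inv2_unique[symmetric]) auto
qed

lemma inv2_eq_vc_inv2:
  assumes "a \<in> Arr2 B" "b \<in> Arr2 B" "c2 B a = d2 B b" "b \<odot> a = c"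
  shows "inv2 B b = a \<odot> inv2 B c"
proof -
  have "a \<odot> inv2 B c = a \<odot> (inv2 B a \<odot> inv2 B b)"
    using assms(1-3) by (simp add: inv2_vc flip: assms(4))
  also have "\<dots> = inv2 B b" using assms(1-3) by simp
  finally show ?thesis by simp
qed

lemma iso_cancel_left:
  assumes "a \<in> Arr2 B" "b \<in> Arr2 B" "k \<in> Arr2 B" "d2 B k = c2 B a" "d2 B k = c2 B b"
    and "k \<odot> a = k \<odot> b"
  shows "a = b"
  by (metis assms inv2_cancel(1))

lemma iso_cancel_right:
  assumes "a \<in> Arr2 B" "b \<in> Arr2 B" "k \<in> Arr2 B" "c2 B k = d2 B a" "c2 B k = d2 B b"
    and "a \<odot> k = b \<odot> k"
  shows "a = b"
  by (metis assms inv2_cancel(4))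

lemma vc_hc2:
  "\<lbrakk>a \<in> Arr2 B; a' \<in> Arr2 B; b \<in> Arr2 B; b' \<in> Arr2 B;
    c2 B a = d2 B a'; c2 B b = d2 B b'; t1 B (d2 B a) = s1 B (d2 B b)\<rbrakk> \<Longrightarrow>
   (b' \<star> a') \<odot> (b \<star> a) = (b' \<odot> b) \<star> (a' \<odot> a)"
  using hc2_interchange by simp

lemma whisker_left_vc:
  "\<lbrakk>g \<in> Arr1 B; a \<in> Arr2 B; b \<in> Arr2 B; c2 B a = d2 B b; t1 B (d2 B a) = s1 B g\<rbrakk> \<Longrightarrow>
   \<iota> g \<star> (b \<odot> a) = (\<iota> g \<star> b) \<odot> (\<iota> g \<star> a)"
  by (simp add: vc_hc2)

lemma whisker_right_vc:
  "\<lbrakk>f \<in> Arr1 B; a \<in> Arr2 B; b \<in> Arr2 B; c2 B a = d2 B b; t1 B f = s1 B (d2 B a)\<rbrakk> \<Longrightarrow>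
   (b \<odot> a) \<star> \<iota> f = (b \<star> \<iota> f) \<odot> (a \<star> \<iota> f)"
  by (simp add: vc_hc2)

lemma aa_inv2_nat:
  assumes "a \<in> Arr2 B" "b \<in> Arr2 B" "c \<in> Arr2 B"
    and "t1 B (d2 B a) = s1 B (d2 B b)" "t1 B (d2 B b) = s1 B (d2 B c)"
  shows "inv2 B (aa B (c2 B c) (c2 B b) (c2 B a)) \<odot> (c \<star> (b \<star> a)) =
    ((c \<star> b) \<star> a) \<odot> inv2 B (aa B (d2 B c) (d2 B b) (d2 B a))"
proof -
  let ?A = "aa B (c2 B c) (c2 B b) (c2 B a)" and ?A' = "aa B (d2 B c) (d2 B b) (d2 B a)"
  have "inv2 B ?A \<odot> (c \<star> (b \<star> a)) = inv2 B ?A \<odot> (((c \<star> (b \<star> a)) \<odot> ?A') \<odot> inv2 B ?A')"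
    using assms by simp
  also have "\<dots> = inv2 B ?A \<odot> ((?A \<odot> ((c \<star> b) \<star> a)) \<odot> inv2 B ?A')"
    using aa_nat assms by simp
  also have "\<dots> = ((c \<star> b) \<star> a) \<odot> inv2 B ?A'"
    using assms by (simp add: vc_assoc)
  finally show ?thesis .
qed

lemma id1_whisker_left_inj:
  assumes "a \<in> Arr2 B" "b \<in> Arr2 B" "d2 B a = d2 B b" "c2 B a = c2 B b"
    and "\<iota> (id1 B (t1 B (d2 B a))) \<star> a = \<iota> (id1 B (t1 B (d2 B a))) \<star> b"
  shows "a = b"
proof -
  have "a = (ll B (c2 B a) \<odot> (\<iota> (id1 B (t1 B (d2 B a))) \<star> a)) \<odot> inv2 B (ll B (d2 B a))"
    using ll_nat[of a] assms(1) by simp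
  also have "\<dots> = (ll B (c2 B b) \<odot> (\<iota> (id1 B (t1 B (d2 B b))) \<star> b)) \<odot> inv2 B (ll B (d2 B b))"
    using assms by simp
  also have "\<dots> = b" using ll_nat[of b] assms(2) by simp
  finally show ?thesis .
qed

lemma id1_whisker_right_inj:
  assumes "a \<in> Arr2 B" "b \<in> Arr2 B" "d2 B a = d2 B b" "c2 B a = c2 B b"
    and "a \<star> \<iota> (id1 B (s1 B (d2 B a))) = b \<star> \<iota> (id1 B (s1 B (d2 B a)))"
  shows "a = b"
proof -
  have "a = (rr B (c2 B a) \<odot> (a \<star> \<iota> (id1 B (s1 B (d2 B a))))) \<odot> inv2 B (rr B (d2 B a))"
    using rr_nat[of a] assms(1) by simp
  also have "\<dots> = (rr B (c2 B b) \<odot> (b \<star> \<iota> (id1 B (s1 B (d2 B b))))) \<odot> inv2 B (rr B (d2 B b))"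
    using assms by simp
  also have "\<dots> = b" using rr_nat[of b] assms(2) by simp
  finally show ?thesis .
qed

text \<open>Kelly's redundant unit axiom. Whiskered on the left by an identity, both sides become the
  pentagon pasted with instances of the triangle axiom.\<close>

lemma ll_hc1:
  assumes F: "F \<in> Arr1 B" and X: "X \<in> Arr1 B" and FX: "t1 B X = s1 B F"
  shows "ll B (F \<bullet> X) \<odot> aa B (id1 B (t1 B F)) F X = ll B F \<star> \<iota> X"
proof -
  let ?u = "id1 B (t1 B F)"
  let ?a = "aa B ?u F X" and ?K = "aa B ?u (?u \<bullet> F) X \<odot> (aa B ?u ?u F \<star> \<iota> X)"
  let ?rhs = "?a \<odot> ((rr B ?u \<star> \<iota> F) \<star> \<iota> X)"
  have pent: "aa B ?u ?u (F \<bullet> X) \<odot> aa B (?u \<bullet> ?u) F X = (\<iota> ?u \<star> ?a) \<odot> ?K"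
    using pentagon[of X F ?u ?u] F X FX by simp
  have tri_FX: "(\<iota> ?u \<star> ll B (F \<bullet> X)) \<odot> aa B ?u ?u (F \<bullet> X) = rr B ?u \<star> \<iota> (F \<bullet> X)"
    using triangle[of "F \<bullet> X" ?u] F X FX by simp
  have tri_F: "(\<iota> ?u \<star> ll B F) \<odot> aa B ?u ?u F = rr B ?u \<star> \<iota> F"
    using triangle[of F ?u] F by simp
  have nat_rr: "(rr B ?u \<star> (\<iota> F \<star> \<iota> X)) \<odot> aa B (?u \<bullet> ?u) F X = ?rhs"
    using aa_nat[of "\<iota> X" "\<iota> F" "rr B ?u"] F X FX by simp
  have nat_ll: "(\<iota> ?u \<star> (ll B F \<star> \<iota> X)) \<odot> aa B ?u (?u \<bullet> F) X = ?a \<odot> ((\<iota> ?u \<star> ll B F) \<star> \<iota> X)"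
    using aa_nat[of "\<iota> X" "ll B F" "\<iota> ?u"] F X FX by simp
  have lhs: "(\<iota> ?u \<star> (ll B (F \<bullet> X) \<odot> ?a)) \<odot> ?K = ?rhs"
  proof -
    have "(\<iota> ?u \<star> (ll B (F \<bullet> X) \<odot> ?a)) \<odot> ?K = (\<iota> ?u \<star> ll B (F \<bullet> X)) \<odot> (\<iota> ?u \<star> ?a) \<odot> ?K"
      using F X FX by (simp add: whisker_left_vc vc_assoc)
    also have "\<dots> = (rr B ?u \<star> \<iota> (F \<bullet> X)) \<odot> aa B (?u \<bullet> ?u) F X"
      unfolding pent[symmetric] using tri_FX F X FX by (simp add: vc_assoc)
    finally show ?thesis using nat_rr F X FX by simp
  qed
  have rhs: "(\<iota> ?u \<star> (ll B F \<star> \<iota> X)) \<odot> ?K = ?rhs"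
  proof -
    have "(\<iota> ?u \<star> (ll B F \<star> \<iota> X)) \<odot> ?K =
        ((\<iota> ?u \<star> (ll B F \<star> \<iota> X)) \<odot> aa B ?u (?u \<bullet> F) X) \<odot> (aa B ?u ?u F \<star> \<iota> X)"
      using F X FX by (simp add: vc_assoc)
    also have "\<dots> = (?a \<odot> ((\<iota> ?u \<star> ll B F) \<star> \<iota> X)) \<odot> (aa B ?u ?u F \<star> \<iota> X)"
      unfolding nat_ll ..
    also have "\<dots> = ?rhs"
      unfolding tri_F[symmetric] using F X FX by (simp add: whisker_right_vc vc_assoc)
    finally show ?thesis .
  qed
  have "\<iota> ?u \<star> (ll B (F \<bullet> X) \<odot> ?a) = \<iota> ?u \<star> (ll B F \<star> \<iota> X)"
    by (rule iso_cancel_right[where k = ?K]) (use lhs rhs F X FX in simp_all)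
  then show ?thesis
    using id1_whisker_left_inj[of "ll B (F \<bullet> X) \<odot> ?a" "ll B F \<star> \<iota> X"] F X FX by simp
qed

lemma pentagon_inv2:
  assumes "f \<in> Arr1 B" "g \<in> Arr1 B" "h \<in> Arr1 B" "k \<in> Arr1 B"
    and "t1 B f = s1 B g" "t1 B g = s1 B h" "t1 B h = s1 B k"
  shows "(\<iota> k \<star> inv2 B (aa B h g f)) \<odot> aa B k h (g \<bullet> f) =
    aa B k (h \<bullet> g) f \<odot> ((aa B k h g \<star> \<iota> f) \<odot> inv2 B (aa B (k \<bullet> h) g f))"
proof -
  let ?A = "aa B h g f" and ?A' = "aa B (k \<bullet> h) g f"
  have "(\<iota> k \<star> inv2 B ?A) \<odot> aa B k h (g \<bullet> f) =
      (\<iota> k \<star> inv2 B ?A) \<odot> ((aa B k h (g \<bullet> f) \<odot> ?A') \<odot> inv2 B ?A')"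
    using assms by simp
  also have "\<dots> = (\<iota> k \<star> inv2 B ?A) \<odot>
      (((\<iota> k \<star> ?A) \<odot> (aa B k (h \<bullet> g) f \<odot> (aa B k h g \<star> \<iota> f))) \<odot> inv2 B ?A')"
    using pentagon assms by simp
  also have "\<dots> = ((\<iota> k \<star> inv2 B ?A) \<odot> (\<iota> k \<star> ?A)) \<odot>
      (aa B k (h \<bullet> g) f \<odot> ((aa B k h g \<star> \<iota> f) \<odot> inv2 B ?A'))"
    using assms by (simp add: vc_assoc)
  also have "(\<iota> k \<star> inv2 B ?A) \<odot> (\<iota> k \<star> ?A) = \<iota> (k \<bullet> ((h \<bullet> g) \<bullet> f))"
    using assms by (simp add: vc_hc2)
  finally show ?thesis using assms by simp
qed

text \<open>The inverse axiom whiskered on the right by \<open>X\<close>, with the associators rearranged by the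
  pentagon and the left unitor by Kelly's lemma.\<close>

lemma inverse_ax_hc1:
  assumes F: "F \<in> Arr1 B" and X: "X \<in> Arr1 B" and FX: "t1 B X = s1 B F"
  shows "(\<iota> F \<star> ll B X) \<odot> (\<iota> F \<star> (ee B F \<star> \<iota> X)) \<odot> (\<iota> F \<star> inv2 B (aa B (st1 B F) F X)) \<odot>
    aa B F (st1 B F) (F \<bullet> X) \<odot> (ii B F \<star> \<iota> (F \<bullet> X)) = ll B (F \<bullet> X)"
proof -
  let ?S = "st1 B F" and ?u = "id1 B (t1 B F)" and ?u' = "id1 B (s1 B F)"
  let ?E = "\<iota> F \<star> (ee B F \<star> \<iota> X)" and ?I = "ii B F \<star> \<iota> (F \<bullet> X)"
  let ?a = "aa B F ?S F \<star> \<iota> X" and ?a' = "aa B (F \<bullet> ?S) F X"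
  have pent: "(\<iota> F \<star> inv2 B (aa B ?S F X)) \<odot> aa B F ?S (F \<bullet> X) =
      aa B F (?S \<bullet> F) X \<odot> ?a \<odot> inv2 B ?a'"
    using pentagon_inv2[of X F ?S F] F X FX by simp
  have nat_ee: "?E \<odot> aa B F (?S \<bullet> F) X = aa B F ?u' X \<odot> ((\<iota> F \<star> ee B F) \<star> \<iota> X)"
    using aa_nat[of "\<iota> X" "ee B F" "\<iota> F"] F X FX by simp
  have nat_ii: "inv2 B ?a' \<odot> ?I = ((ii B F \<star> \<iota> F) \<star> \<iota> X) \<odot> inv2 B (aa B ?u F X)"
    using aa_inv2_nat[of "\<iota> X" "\<iota> F" "ii B F"] F X FX by simp
  have tri: "(\<iota> F \<star> ll B X) \<odot> aa B F ?u' X = rr B F \<star> \<iota> X"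
    using triangle[of X F] F X FX by simp
  have inv_ax: "rr B F \<odot> (\<iota> F \<star> ee B F) \<odot> aa B F ?S F \<odot> (ii B F \<star> \<iota> F) = ll B F"
    using inverse_ax[of F] F by simp
  have kelly: "(ll B F \<star> \<iota> X) \<odot> inv2 B (aa B ?u F X) = ll B (F \<bullet> X)"
    using ll_hc1[OF F X FX, symmetric] F X FX by simp
  have "(\<iota> F \<star> ll B X) \<odot> ?E \<odot> (\<iota> F \<star> inv2 B (aa B ?S F X)) \<odot> aa B F ?S (F \<bullet> X) \<odot> ?I =
      (\<iota> F \<star> ll B X) \<odot> ?E \<odot> ((\<iota> F \<star> inv2 B (aa B ?S F X)) \<odot> aa B F ?S (F \<bullet> X)) \<odot> ?I"
    using F X FX by (simp add: vc_assoc)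
  also have "\<dots> = (\<iota> F \<star> ll B X) \<odot> (?E \<odot> aa B F (?S \<bullet> F) X) \<odot> ?a \<odot> (inv2 B ?a' \<odot> ?I)"
    unfolding pent using F X FX by (simp add: vc_assoc)
  also have "\<dots> = ((\<iota> F \<star> ll B X) \<odot> aa B F ?u' X) \<odot> ((\<iota> F \<star> ee B F) \<star> \<iota> X) \<odot> ?a \<odot>
      ((ii B F \<star> \<iota> F) \<star> \<iota> X) \<odot> inv2 B (aa B ?u F X)"
    unfolding nat_ee nat_ii using F X FX by (simp add: vc_assoc)
  also have "\<dots> = ((rr B F \<odot> (\<iota> F \<star> ee B F) \<odot> aa B F ?S F \<odot> (ii B F \<star> \<iota> F)) \<star> \<iota> X) \<odot>
      inv2 B (aa B ?u F X)"
    unfolding tri using F X FX by (simp add: whisker_right_vc vc_assoc)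
  also have "\<dots> = ll B (F \<bullet> X)"
    unfolding inv_ax kelly ..
  finally show ?thesis .
qed

end

text \<open>A letter \<open>(f, True)\<close> stands for the 1-cell \<open>f\<close> and \<open>(f, False)\<close> for its formal inverse.
  A path from the 0-cell \<open>A\<close> is a list of letters whose head is the last letter traversed;
  \<open>path1 B A r\<close> is its composite, ending in \<open>id1 B A\<close>.\<close>

fun inv_letter :: "'b \<times> bool \<Rightarrow> 'b \<times> bool" where
  "inv_letter (f, b) = (f, \<not> b)"

fun letter1 :: "('o, 'b, 'c) bigrp \<Rightarrow> 'b \<times> bool \<Rightarrow> 'b" where
  "letter1 B (f, True) = f"
| "letter1 B (f, False) = st1 B f"

fun letter_src :: "('o, 'b, 'c) bigrp \<Rightarrow> 'b \<times> bool \<Rightarrow> 'o" where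
  "letter_src B (f, True) = s1 B f"
| "letter_src B (f, False) = t1 B f"

fun letter_tgt :: "('o, 'b, 'c) bigrp \<Rightarrow> 'b \<times> bool \<Rightarrow> 'o" where
  "letter_tgt B (f, True) = t1 B f"
| "letter_tgt B (f, False) = s1 B f"

fun path_tgt :: "('o, 'b, 'c) bigrp \<Rightarrow> 'o \<Rightarrow> ('b \<times> bool) list \<Rightarrow> 'o" where
  "path_tgt B A [] = A"
| "path_tgt B A (x # r) = letter_tgt B x"

fun path1 :: "('o, 'b, 'c) bigrp \<Rightarrow> 'o \<Rightarrow> ('b \<times> bool) list \<Rightarrow> 'b" where
  "path1 B A [] = id1 B A"
| "path1 B A (x # r) = hc1 B (letter1 B x) (path1 B A r)"

fun reduced_path :: "('o, 'b, 'c) bigrp \<Rightarrow> 'o \<Rightarrow> ('b \<times> bool) list \<Rightarrow> bool" where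
  "reduced_path B A [] = (A \<in> Ob B)"
| "reduced_path B A (x # r) =
    (fst x \<in> Arr1 B \<and> letter_src B x = path_tgt B A r \<and> reduced_path B A r \<and>
     (case r of [] \<Rightarrow> True | y # _ \<Rightarrow> y \<noteq> inv_letter x))"

fun push :: "'b \<times> bool \<Rightarrow> ('b \<times> bool) list \<Rightarrow> ('b \<times> bool) list" where
  "push x [] = [x]"
| "push x (y # r) = (if y = inv_letter x then r else x # y # r)"

fun act :: "('o, 'b) fw \<Rightarrow> ('b \<times> bool) list \<Rightarrow> ('b \<times> bool) list"
and act_inv :: "('o, 'b) fw \<Rightarrow> ('b \<times> bool) list \<Rightarrow> ('b \<times> bool) list" where
  "act (FE f) r = push (f, True) r"
| "act (FI X) r = r"
| "act (FC g f) r = act g (act f r)"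
| "act (FS w) r = act_inv w r"
| "act_inv (FE f) r = push (f, False) r"
| "act_inv (FI X) r = r"
| "act_inv (FC g f) r = act_inv f (act_inv g r)"
| "act_inv (FS w) r = act w r"

lemma inv_letter_inv_letter [simp]: "inv_letter (inv_letter x) = x"
  by (cases x) auto

context bigroupoid
begin

lemma letter1_simps [simp]:
  "fst x \<in> Arr1 B \<Longrightarrow> letter1 B x \<in> Arr1 B"
  "fst x \<in> Arr1 B \<Longrightarrow> s1 B (letter1 B x) = letter_src B x"
  "fst x \<in> Arr1 B \<Longrightarrow> t1 B (letter1 B x) = letter_tgt B x"
  by (cases x; cases "snd x"; auto)+

lemma letter_ends_inv_letter [simp]:
  "letter_src B (inv_letter x) = letter_tgt B x" "letter_tgt B (inv_letter x) = letter_src B x"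
  by (cases x; cases "snd x"; auto)+

lemma letter_ends_Ob [simp]:
  "fst x \<in> Arr1 B \<Longrightarrow> letter_src B x \<in> Ob B" "fst x \<in> Arr1 B \<Longrightarrow> letter_tgt B x \<in> Ob B"
  by (cases x; cases "snd x"; auto)+

lemma reduced_path_Ob: "reduced_path B A r \<Longrightarrow> A \<in> Ob B"
  by (induction r) auto

lemma path_tgt_Ob [simp]: "reduced_path B A r \<Longrightarrow> path_tgt B A r \<in> Ob B"
  by (cases r) auto

lemma path1_simps [simp]:
  "reduced_path B A r \<Longrightarrow> path1 B A r \<in> Arr1 B"
  "reduced_path B A r \<Longrightarrow> s1 B (path1 B A r) = A"
  "reduced_path B A r \<Longrightarrow> t1 B (path1 B A r) = path_tgt B A r"
  by (induction r) (auto simp: reduced_path_Ob)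

lemma reduced_path_push:
  assumes "reduced_path B A r" "fst x \<in> Arr1 B" "letter_src B x = path_tgt B A r"
  shows "reduced_path B A (push x r) \<and> path_tgt B A (push x r) = letter_tgt B x"
proof (cases r)
  case (Cons y r')
  show ?thesis
  proof (cases "y = inv_letter x")
    case True
    then have "path_tgt B A r' = letter_tgt B x" using assms Cons by auto
    then show ?thesis using assms Cons True by auto
  qed (use assms Cons in auto)
qed (use assms in auto)

lemma push_inv_letter_push:
  assumes "reduced_path B A r" "fst x \<in> Arr1 B" "letter_src B x = path_tgt B A r"
  shows "push (inv_letter x) (push x r) = r"
proof (cases r)
  case (Cons y r')
  show ?thesis
  proof (cases "y = inv_letter x")
    case True
    then show ?thesis using assms Cons by (cases r') auto
  qed (use assms Cons in auto)
qed auto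

lemma J1_simps [simp]:
  "fwf B w \<Longrightarrow> J1 B w \<in> Arr1 B"
  "fwf B w \<Longrightarrow> s1 B (J1 B w) = fsrc B w"
  "fwf B w \<Longrightarrow> t1 B (J1 B w) = ftgt B w"
  by (induction w) auto

lemma act_act_inv:
  "fwf B w \<Longrightarrow>
    (\<forall>r. reduced_path B A r \<and> path_tgt B A r = fsrc B w \<longrightarrow>
       reduced_path B A (act w r) \<and> path_tgt B A (act w r) = ftgt B w \<and> act_inv w (act w r) = r) \<and>
    (\<forall>r. reduced_path B A r \<and> path_tgt B A r = ftgt B w \<longrightarrow>
       reduced_path B A (act_inv w r) \<and> path_tgt B A (act_inv w r) = fsrc B w \<and>
       act w (act_inv w r) = r)"
proof (induction w)
  case (FE f)
  have "push (f, False) (push (f, True) r) = r"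
    if "reduced_path B A r" "path_tgt B A r = s1 B f" for r
    using push_inv_letter_push[of A r "(f, True)"] that FE by auto
  moreover have "push (f, True) (push (f, False) r) = r"
    if "reduced_path B A r" "path_tgt B A r = t1 B f" for r
    using push_inv_letter_push[of A r "(f, False)"] that FE by auto
  ultimately show ?case
    using FE reduced_path_push[of A _ "(f, True)"] reduced_path_push[of A _ "(f, False)"] by auto
qed auto

lemma act_simps [simp]:
  "\<lbrakk>fwf B w; reduced_path B A r; path_tgt B A r = fsrc B w\<rbrakk> \<Longrightarrow> reduced_path B A (act w r)"
  "\<lbrakk>fwf B w; reduced_path B A r; path_tgt B A r = fsrc B w\<rbrakk> \<Longrightarrow> path_tgt B A (act w r) = ftgt B w"
  "\<lbrakk>fwf B w; reduced_path B A r; path_tgt B A r = fsrc B w\<rbrakk> \<Longrightarrow> act_inv w (act w r) = r"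
  "\<lbrakk>fwf B w; reduced_path B A r; path_tgt B A r = ftgt B w\<rbrakk> \<Longrightarrow> reduced_path B A (act_inv w r)"
  "\<lbrakk>fwf B w; reduced_path B A r; path_tgt B A r = ftgt B w\<rbrakk> \<Longrightarrow> path_tgt B A (act_inv w r) = fsrc B w"
  "\<lbrakk>fwf B w; reduced_path B A r; path_tgt B A r = ftgt B w\<rbrakk> \<Longrightarrow> act w (act_inv w r) = r"
  using act_act_inv[of w A] by blast+

definition cancel2 :: "'b \<times> bool \<Rightarrow> 'c" where
  "cancel2 x = (if snd x then inv2 B (ii B (fst x)) else ee B (fst x))"

fun push2 :: "'o \<Rightarrow> 'b \<times> bool \<Rightarrow> ('b \<times> bool) list \<Rightarrow> 'c" where
  "push2 A x [] = \<iota> (letter1 B x \<bullet> id1 B A)"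
| "push2 A x (y # r) =
    (if y = inv_letter x
     then ll B (path1 B A r) \<odot> (cancel2 x \<star> \<iota> (path1 B A r)) \<odot>
       inv2 B (aa B (letter1 B x) (letter1 B y) (path1 B A r))
     else \<iota> (letter1 B x \<bullet> path1 B A (y # r)))"

text \<open>\<open>reduce2 A w r : J1 B w \<bullet> path1 B A r \<Rightarrow> path1 B A (act w r)\<close>. In the clause for
  \<open>FS w\<close>, the path is first rewritten as \<open>act w q\<close> with \<open>q = act_inv w r\<close>, and \<open>st1 B (J1 B w)\<close>
  is then cancelled against \<open>J1 B w\<close>.\<close>

fun reduce2 :: "'o \<Rightarrow> ('o, 'b) fw \<Rightarrow> ('b \<times> bool) list \<Rightarrow> 'c" where
  "reduce2 A (FE f) r = push2 A (f, True) r"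
| "reduce2 A (FI X) r = ll B (path1 B A r)"
| "reduce2 A (FC g f) r =
    reduce2 A g (act f r) \<odot> (\<iota> (J1 B g) \<star> reduce2 A f r) \<odot> aa B (J1 B g) (J1 B f) (path1 B A r)"
| "reduce2 A (FS w) r =
    ll B (path1 B A (act_inv w r)) \<odot> (ee B (J1 B w) \<star> \<iota> (path1 B A (act_inv w r))) \<odot>
    inv2 B (aa B (st1 B (J1 B w)) (J1 B w) (path1 B A (act_inv w r))) \<odot>
    (\<iota> (st1 B (J1 B w)) \<star> inv2 B (reduce2 A w (act_inv w r)))"

lemma cancel2_simps [simp]:
  "fst x \<in> Arr1 B \<Longrightarrow> cancel2 x \<in> Arr2 B"
  "fst x \<in> Arr1 B \<Longrightarrow> d2 B (cancel2 x) = letter1 B x \<bullet> letter1 B (inv_letter x)"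
  "fst x \<in> Arr1 B \<Longrightarrow> c2 B (cancel2 x) = id1 B (letter_tgt B x)"
  by (cases x; cases "snd x"; auto simp: cancel2_def)+

lemma push2_in_hom:
  assumes "reduced_path B A r" "fst x \<in> Arr1 B" "letter_src B x = path_tgt B A r"
  shows "push2 A x r \<in> Arr2 B \<and> d2 B (push2 A x r) = letter1 B x \<bullet> path1 B A r \<and>
    c2 B (push2 A x r) = path1 B A (push x r)"
proof (cases r)
  case (Cons y r')
  show ?thesis
  proof (cases "y = inv_letter x")
    case True
    then have "path_tgt B A r' = letter_tgt B x" "reduced_path B A r'" using assms Cons by auto
    then show ?thesis using assms Cons True by auto
  qed (use assms Cons in auto)
qed (use assms in \<open>auto simp: reduced_path_Ob\<close>)

lemma reduce2_in_hom:
  "\<lbrakk>fwf B w; reduced_path B A r; path_tgt B A r = fsrc B w\<rbrakk> \<Longrightarrow>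
   reduce2 A w r \<in> Arr2 B \<and> d2 B (reduce2 A w r) = J1 B w \<bullet> path1 B A r \<and>
   c2 B (reduce2 A w r) = path1 B A (act w r)"
proof (induction w arbitrary: r)
  case (FE f)
  then show ?case using push2_in_hom[of A r "(f, True)"] by auto
next
  case (FS w)
  let ?q = "act_inv w r"
  have "reduced_path B A ?q" "path_tgt B A ?q = fsrc B w" "act w ?q = r"
    using FS.prems by auto
  then show ?case using FS.IH[of ?q] FS.prems by auto
qed auto

lemma reduce2_simps [simp]:
  "\<lbrakk>fwf B w; reduced_path B A r; path_tgt B A r = fsrc B w\<rbrakk> \<Longrightarrow> reduce2 A w r \<in> Arr2 B"
  "\<lbrakk>fwf B w; reduced_path B A r; path_tgt B A r = fsrc B w\<rbrakk> \<Longrightarrow>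
    d2 B (reduce2 A w r) = J1 B w \<bullet> path1 B A r"
  "\<lbrakk>fwf B w; reduced_path B A r; path_tgt B A r = fsrc B w\<rbrakk> \<Longrightarrow>
    c2 B (reduce2 A w r) = path1 B A (act w r)"
  using reduce2_in_hom by blast+

lemma fwf_ends_Ob [simp]: "fwf B w \<Longrightarrow> fsrc B w \<in> Ob B" "fwf B w \<Longrightarrow> ftgt B w \<in> Ob B"
  by (metis J1_simps arr1_ends_Ob)+

lemma twf_simps [simp]:
  "twf B a \<Longrightarrow> fwf B (tdom B a)"
  "twf B a \<Longrightarrow> fwf B (tcod B a)"
  "twf B a \<Longrightarrow> fsrc B (tcod B a) = fsrc B (tdom B a)"
  "twf B a \<Longrightarrow> ftgt B (tcod B a) = ftgt B (tdom B a)"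
  by (induction a) auto

lemma J2_simps [simp]:
  "twf B a \<Longrightarrow> J2 B a \<in> Arr2 B"
  "twf B a \<Longrightarrow> d2 B (J2 B a) = J1 B (tdom B a)"
  "twf B a \<Longrightarrow> c2 B (J2 B a) = J1 B (tcod B a)"
  by (induction a) auto

lemma act_tdom_tcod:
  "twf B a \<Longrightarrow>
    (\<forall>r. reduced_path B A r \<and> path_tgt B A r = fsrc B (tdom B a) \<longrightarrow>
      act (tcod B a) r = act (tdom B a) r) \<and>
    (\<forall>r. reduced_path B A r \<and> path_tgt B A r = ftgt B (tdom B a) \<longrightarrow>
      act_inv (tcod B a) r = act_inv (tdom B a) r)"
proof (induction a)
  case (TV b a)
  then show ?case by (metis twf_simps twf.simps(2) tdom.simps(2) tcod.simps(2))
qed auto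

lemma act_tcod [simp]:
  "\<lbrakk>twf B a; reduced_path B A r; path_tgt B A r = fsrc B (tdom B a)\<rbrakk> \<Longrightarrow>
    act (tcod B a) r = act (tdom B a) r"
  "\<lbrakk>twf B a; reduced_path B A r; path_tgt B A r = ftgt B (tdom B a)\<rbrakk> \<Longrightarrow>
    act_inv (tcod B a) r = act_inv (tdom B a) r"
  using act_tdom_tcod[of a A] by blast+

lemma reduce2_aa:
  assumes "fwf B h" "fwf B g" "fwf B f" "ftgt B f = fsrc B g" "ftgt B g = fsrc B h"
    and "reduced_path B A r" "path_tgt B A r = fsrc B f"
  shows "reduce2 A (FC h (FC g f)) r \<odot> (aa B (J1 B h) (J1 B g) (J1 B f) \<star> \<iota> (path1 B A r)) =
    reduce2 A (FC (FC h g) f) r"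
proof -
  let ?rf = "act f r" and ?rfg = "act g (act f r)"
  have paths: "reduced_path B A ?rf" "path_tgt B A ?rf = fsrc B g"
    "reduced_path B A ?rfg" "path_tgt B A ?rfg = fsrc B h"
    using assms by auto
  let ?P = "path1 B A r" and ?Pf = "path1 B A ?rf"
  let ?Jh = "J1 B h" and ?Jg = "J1 B g" and ?Jf = "J1 B f"
  let ?Fh = "reduce2 A h ?rfg" and ?Fg = "reduce2 A g ?rf" and ?Ff = "reduce2 A f r"
  have pent: "(\<iota> ?Jh \<star> aa B ?Jg ?Jf ?P) \<odot> aa B ?Jh (?Jg \<bullet> ?Jf) ?P \<odot> (aa B ?Jh ?Jg ?Jf \<star> \<iota> ?P) =
      aa B ?Jh ?Jg (?Jf \<bullet> ?P) \<odot> aa B (?Jh \<bullet> ?Jg) ?Jf ?P"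
    using pentagon[of ?P ?Jf ?Jg ?Jh] assms by simp
  have nat_aa: "(\<iota> ?Jh \<star> (\<iota> ?Jg \<star> ?Ff)) \<odot> aa B ?Jh ?Jg (?Jf \<bullet> ?P) =
      aa B ?Jh ?Jg ?Pf \<odot> (\<iota> (?Jh \<bullet> ?Jg) \<star> ?Ff)"
    using aa_nat[of ?Ff "\<iota> ?Jg" "\<iota> ?Jh"] assms by simp
  have "reduce2 A (FC h (FC g f)) r \<odot> (aa B ?Jh ?Jg ?Jf \<star> \<iota> ?P) =
      ?Fh \<odot> (\<iota> ?Jh \<star> ?Fg) \<odot> (\<iota> ?Jh \<star> (\<iota> ?Jg \<star> ?Ff)) \<odot>
      (\<iota> ?Jh \<star> aa B ?Jg ?Jf ?P) \<odot> aa B ?Jh (?Jg \<bullet> ?Jf) ?P \<odot> (aa B ?Jh ?Jg ?Jf \<star> \<iota> ?P)"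
    using assms paths by (simp add: whisker_left_vc vc_assoc[symmetric])
  also have "\<dots> = ?Fh \<odot> (\<iota> ?Jh \<star> ?Fg) \<odot>
      ((\<iota> ?Jh \<star> (\<iota> ?Jg \<star> ?Ff)) \<odot> aa B ?Jh ?Jg (?Jf \<bullet> ?P)) \<odot> aa B (?Jh \<bullet> ?Jg) ?Jf ?P"
    unfolding pent using assms paths by (simp add: vc_assoc)
  also have "\<dots> = ?Fh \<odot> (\<iota> ?Jh \<star> ?Fg) \<odot>
      (aa B ?Jh ?Jg ?Pf \<odot> (\<iota> (?Jh \<bullet> ?Jg) \<star> ?Ff)) \<odot> aa B (?Jh \<bullet> ?Jg) ?Jf ?P"
    unfolding nat_aa ..
  also have "\<dots> = reduce2 A (FC (FC h g) f) r"
    using assms paths by (simp add: vc_assoc)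
  finally show ?thesis .
qed

lemma reduce2_ll:
  assumes "fwf B f" "reduced_path B A r" "path_tgt B A r = fsrc B f"
  shows "reduce2 A f r \<odot> (ll B (J1 B f) \<star> \<iota> (path1 B A r)) = reduce2 A (FC (FI (ftgt B f)) f) r"
proof -
  let ?P = "path1 B A r" and ?Jf = "J1 B f" and ?F = "reduce2 A f r" and ?u = "id1 B (ftgt B f)"
  have nat_ll: "ll B (path1 B A (act f r)) \<odot> (\<iota> ?u \<star> ?F) = ?F \<odot> ll B (?Jf \<bullet> ?P)"
    using ll_nat[of ?F] assms by simp
  have kelly: "ll B (?Jf \<bullet> ?P) \<odot> aa B ?u ?Jf ?P = ll B ?Jf \<star> \<iota> ?P"
    using ll_hc1[of ?Jf ?P] assms by simp
  have "reduce2 A (FC (FI (ftgt B f)) f) r = (ll B (path1 B A (act f r)) \<odot> (\<iota> ?u \<star> ?F)) \<odot> aa B ?u ?Jf ?P"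
    using assms by (simp add: vc_assoc)
  also have "\<dots> = (?F \<odot> ll B (?Jf \<bullet> ?P)) \<odot> aa B ?u ?Jf ?P"
    using nat_ll by simp
  also have "\<dots> = ?F \<odot> (ll B ?Jf \<star> \<iota> ?P)"
    using kelly assms by (simp add: vc_assoc[symmetric])
  finally show ?thesis by simp
qed

lemma reduce2_rr:
  assumes "fwf B f" "reduced_path B A r" "path_tgt B A r = fsrc B f"
  shows "reduce2 A f r \<odot> (rr B (J1 B f) \<star> \<iota> (path1 B A r)) = reduce2 A (FC f (FI (fsrc B f))) r"
  using triangle[of "path1 B A r" "J1 B f"] assms by simp

lemma reduce2_ee:
  assumes "fwf B f" "reduced_path B A r" "path_tgt B A r = fsrc B f"
  shows "reduce2 A (FI (fsrc B f)) r \<odot> (ee B (J1 B f) \<star> \<iota> (path1 B A r)) = reduce2 A (FC (FS f) f) r"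
proof -
  let ?P = "path1 B A r" and ?Jf = "J1 B f" and ?F = "reduce2 A f r" and ?S = "st1 B (J1 B f)"
  have cancel: "(\<iota> ?S \<star> inv2 B ?F) \<odot> (\<iota> ?S \<star> ?F) = \<iota> (?S \<bullet> (?Jf \<bullet> ?P))"
    using assms by (simp add: vc_hc2)
  have "reduce2 A (FC (FS f) f) r = ll B ?P \<odot> ((ee B ?Jf \<star> \<iota> ?P) \<odot> (inv2 B (aa B ?S ?Jf ?P) \<odot>
      (((\<iota> ?S \<star> inv2 B ?F) \<odot> (\<iota> ?S \<star> ?F)) \<odot> aa B ?S ?Jf ?P)))"
    using assms by (simp add: vc_assoc[symmetric])
  also have "\<dots> = ll B ?P \<odot> (ee B ?Jf \<star> \<iota> ?P)"
    unfolding cancel using assms by simp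
  finally show ?thesis by simp
qed

lemma reduce2_ii:
  assumes "fwf B f" "reduced_path B A r" "path_tgt B A r = ftgt B f"
  shows "reduce2 A (FC f (FS f)) r \<odot> (ii B (J1 B f) \<star> \<iota> (path1 B A r)) = reduce2 A (FI (ftgt B f)) r"
proof -
  let ?q = "act_inv f r"
  have q: "reduced_path B A ?q" "path_tgt B A ?q = fsrc B f" "act f ?q = r"
    using assms by auto
  let ?X = "path1 B A ?q" and ?P = "path1 B A r" and ?F = "J1 B f" and ?S = "st1 B (J1 B f)"
  let ?psi = "reduce2 A f ?q" and ?u = "id1 B (ftgt B f)"
  have inv_ax: "(\<iota> ?F \<star> ll B ?X) \<odot> (\<iota> ?F \<star> (ee B ?F \<star> \<iota> ?X)) \<odot> (\<iota> ?F \<star> inv2 B (aa B ?S ?F ?X)) \<odot>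
      aa B ?F ?S (?F \<bullet> ?X) \<odot> (ii B ?F \<star> \<iota> (?F \<bullet> ?X)) = ll B (?F \<bullet> ?X)"
    using inverse_ax_hc1[of ?F ?X] assms q by simp
  have nat_aa: "(\<iota> ?F \<star> (\<iota> ?S \<star> inv2 B ?psi)) \<odot> aa B ?F ?S ?P =
      aa B ?F ?S (?F \<bullet> ?X) \<odot> (\<iota> (?F \<bullet> ?S) \<star> inv2 B ?psi)"
    using aa_nat[of "inv2 B ?psi" "\<iota> ?S" "\<iota> ?F"] assms q by simp
  have interchange: "(\<iota> (?F \<bullet> ?S) \<star> inv2 B ?psi) \<odot> (ii B ?F \<star> \<iota> ?P) =
      (ii B ?F \<star> \<iota> (?F \<bullet> ?X)) \<odot> (\<iota> ?u \<star> inv2 B ?psi)"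
    using assms q by (simp add: vc_hc2)
  have nat_ll: "ll B ?P \<odot> (\<iota> ?u \<star> ?psi) = ?psi \<odot> ll B (?F \<bullet> ?X)"
    using ll_nat[of ?psi] assms q by simp
  have "reduce2 A (FC f (FS f)) r \<odot> (ii B ?F \<star> \<iota> ?P) =
      ?psi \<odot> (\<iota> ?F \<star> ll B ?X) \<odot> (\<iota> ?F \<star> (ee B ?F \<star> \<iota> ?X)) \<odot> (\<iota> ?F \<star> inv2 B (aa B ?S ?F ?X)) \<odot>
      ((\<iota> ?F \<star> (\<iota> ?S \<star> inv2 B ?psi)) \<odot> aa B ?F ?S ?P) \<odot> (ii B ?F \<star> \<iota> ?P)"
    using assms q by (simp add: whisker_left_vc vc_assoc[symmetric])
  also have "\<dots> = ?psi \<odot> (\<iota> ?F \<star> ll B ?X) \<odot> (\<iota> ?F \<star> (ee B ?F \<star> \<iota> ?X)) \<odot>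
      (\<iota> ?F \<star> inv2 B (aa B ?S ?F ?X)) \<odot> aa B ?F ?S (?F \<bullet> ?X) \<odot>
      ((\<iota> (?F \<bullet> ?S) \<star> inv2 B ?psi) \<odot> (ii B ?F \<star> \<iota> ?P))"
    unfolding nat_aa using assms q by (simp add: vc_assoc[symmetric])
  also have "\<dots> = ?psi \<odot> ((\<iota> ?F \<star> ll B ?X) \<odot> (\<iota> ?F \<star> (ee B ?F \<star> \<iota> ?X)) \<odot>
      (\<iota> ?F \<star> inv2 B (aa B ?S ?F ?X)) \<odot> aa B ?F ?S (?F \<bullet> ?X) \<odot> (ii B ?F \<star> \<iota> (?F \<bullet> ?X))) \<odot>
      (\<iota> ?u \<star> inv2 B ?psi)"
    unfolding interchange using assms q by (simp add: vc_assoc)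
  also have "\<dots> = (ll B ?P \<odot> (\<iota> ?u \<star> ?psi)) \<odot> (\<iota> ?u \<star> inv2 B ?psi)"
    unfolding inv_ax nat_ll using assms q by (simp add: vc_assoc)
  also have "\<dots> = ll B ?P"
    using assms q by (simp add: vc_assoc[symmetric] vc_hc2)
  finally show ?thesis by simp
qed

definition reduce2_natural :: "('o, 'b) ft \<Rightarrow> bool" where
  "reduce2_natural a \<longleftrightarrow> (\<forall>A r. reduced_path B A r \<and> path_tgt B A r = fsrc B (tdom B a) \<longrightarrow>
     reduce2 A (tcod B a) r \<odot> (J2 B a \<star> \<iota> (path1 B A r)) = reduce2 A (tdom B a) r)"

lemma reduce2_naturalD:
  "\<lbrakk>reduce2_natural a; reduced_path B A r; path_tgt B A r = fsrc B (tdom B a)\<rbrakk> \<Longrightarrow>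
   reduce2 A (tcod B a) r \<odot> (J2 B a \<star> \<iota> (path1 B A r)) = reduce2 A (tdom B a) r"
  unfolding reduce2_natural_def by blast

lemma reduce2_natural_TV:
  assumes "twf B b" "twf B a" "tcod B a = tdom B b"
    and "reduce2_natural b" "reduce2_natural a"
  shows "reduce2_natural (TV b a)"
  unfolding reduce2_natural_def
proof (intro allI impI, elim conjE)
  fix A r
  assume r: "reduced_path B A r" "path_tgt B A r = fsrc B (tdom B (TV b a))"
  let ?P = "path1 B A r"
  have src: "fsrc B (tdom B b) = fsrc B (tdom B a)" using assms twf_simps(3)[of a] by simp
  have "reduce2 A (tcod B b) r \<odot> ((J2 B b \<odot> J2 B a) \<star> \<iota> ?P) =
      (reduce2 A (tcod B b) r \<odot> (J2 B b \<star> \<iota> ?P)) \<odot> (J2 B a \<star> \<iota> ?P)"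
    using assms src r by (simp add: whisker_right_vc vc_assoc)
  also have "\<dots> = reduce2 A (tdom B a) r"
    using reduce2_naturalD[OF assms(4)] reduce2_naturalD[OF assms(5)] assms src r by simp
  finally show "reduce2 A (tcod B (TV b a)) r \<odot> (J2 B (TV b a) \<star> \<iota> ?P) = reduce2 A (tdom B (TV b a)) r"
    by simp
qed

lemma reduce2_natural_TInv:
  assumes "twf B a" "reduce2_natural a"
  shows "reduce2_natural (TInv a)"
  unfolding reduce2_natural_def
proof (intro allI impI, elim conjE)
  fix A r
  assume r: "reduced_path B A r" "path_tgt B A r = fsrc B (tdom B (TInv a))"
  let ?P = "path1 B A r"
  have "reduce2 A (tdom B a) r \<odot> (inv2 B (J2 B a) \<star> \<iota> ?P) =
      (reduce2 A (tcod B a) r \<odot> (J2 B a \<star> \<iota> ?P)) \<odot> (inv2 B (J2 B a) \<star> \<iota> ?P)"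
    using reduce2_naturalD[OF assms(2)] assms r by simp
  also have "\<dots> = reduce2 A (tcod B a) r"
    using assms r by (simp add: vc_assoc[symmetric] vc_hc2)
  finally show "reduce2 A (tcod B (TInv a)) r \<odot> (J2 B (TInv a) \<star> \<iota> ?P) = reduce2 A (tdom B (TInv a)) r"
    by simp
qed

lemma reduce2_natural_TH:
  assumes "twf B b" "twf B a" "ftgt B (tdom B a) = fsrc B (tdom B b)"
    and "reduce2_natural b" "reduce2_natural a"
  shows "reduce2_natural (TH b a)"
  unfolding reduce2_natural_def
proof (intro allI impI, elim conjE)
  fix A r
  assume r: "reduced_path B A r" "path_tgt B A r = fsrc B (tdom B (TH b a))"
  let ?P = "path1 B A r" and ?r' = "act (tdom B a) r"
  let ?Ja = "J2 B a" and ?Jb = "J2 B b"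
  let ?fa = "J1 B (tdom B a)" and ?ga = "J1 B (tcod B a)"
  let ?fb = "J1 B (tdom B b)" and ?gb = "J1 B (tcod B b)"
  have r': "reduced_path B A ?r'" "path_tgt B A ?r' = fsrc B (tdom B b)" "act (tcod B a) r = ?r'"
    using assms r by auto
  have IHa: "reduce2 A (tcod B a) r \<odot> (?Ja \<star> \<iota> ?P) = reduce2 A (tdom B a) r"
    using reduce2_naturalD[OF assms(5)] r by simp
  have IHb: "reduce2 A (tcod B b) ?r' \<odot> (?Jb \<star> \<iota> (path1 B A ?r')) = reduce2 A (tdom B b) ?r'"
    using reduce2_naturalD[OF assms(4)] r' by simp
  have nat_aa: "aa B ?gb ?ga ?P \<odot> ((?Jb \<star> ?Ja) \<star> \<iota> ?P) = (?Jb \<star> (?Ja \<star> \<iota> ?P)) \<odot> aa B ?fb ?fa ?P"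
    using aa_nat[of "\<iota> ?P" ?Ja ?Jb] assms r by simp
  have interchange: "(\<iota> ?gb \<star> reduce2 A (tcod B a) r) \<odot> (?Jb \<star> (?Ja \<star> \<iota> ?P)) =
      (?Jb \<star> \<iota> (path1 B A ?r')) \<odot> (\<iota> ?fb \<star> reduce2 A (tdom B a) r)"
    using IHa assms r by (simp add: vc_hc2)
  have "reduce2 A (FC (tcod B b) (tcod B a)) r \<odot> ((?Jb \<star> ?Ja) \<star> \<iota> ?P) =
      reduce2 A (tcod B b) ?r' \<odot> ((\<iota> ?gb \<star> reduce2 A (tcod B a) r) \<odot>
        (aa B ?gb ?ga ?P \<odot> ((?Jb \<star> ?Ja) \<star> \<iota> ?P)))"
    using assms r r' by (simp add: vc_assoc[symmetric])
  also have "\<dots> = reduce2 A (tcod B b) ?r' \<odot> (((\<iota> ?gb \<star> reduce2 A (tcod B a) r) \<odot>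
      (?Jb \<star> (?Ja \<star> \<iota> ?P))) \<odot> aa B ?fb ?fa ?P)"
    using nat_aa assms r r' by (simp add: vc_assoc)
  also have "\<dots> = (reduce2 A (tcod B b) ?r' \<odot> (?Jb \<star> \<iota> (path1 B A ?r'))) \<odot>
      ((\<iota> ?fb \<star> reduce2 A (tdom B a) r) \<odot> aa B ?fb ?fa ?P)"
    using interchange assms r r' by (simp add: vc_assoc)
  also have "\<dots> = reduce2 A (FC (tdom B b) (tdom B a)) r"
    using IHb by simp
  finally show "reduce2 A (tcod B (TH b a)) r \<odot> (J2 B (TH b a) \<star> \<iota> ?P) = reduce2 A (tdom B (TH b a)) r"
    by simp
qed

lemma reduce2_natural_TS:
  assumes "twf B a" "reduce2_natural a"
  shows "reduce2_natural (TS a)"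
  unfolding reduce2_natural_def
proof (intro allI impI, elim conjE)
  fix A r
  assume r: "reduced_path B A r" "path_tgt B A r = fsrc B (tdom B (TS a))"
  let ?q = "act_inv (tdom B a) r"
  have q: "reduced_path B A ?q" "path_tgt B A ?q = fsrc B (tdom B a)" "act (tdom B a) ?q = r"
    "act_inv (tcod B a) r = ?q"
    using assms r by auto
  then have q': "act (tcod B a) ?q = r" using assms by simp
  let ?F = "reduce2 A (tdom B a) ?q" and ?F' = "reduce2 A (tcod B a) ?q" and ?Ja = "J2 B a"
  let ?Pq = "path1 B A ?q" and ?Pr = "path1 B A r"
  let ?f = "J1 B (tdom B a)" and ?g = "J1 B (tcod B a)"
  have IH: "?F' \<odot> (?Ja \<star> \<iota> ?Pq) = ?F"
    using reduce2_naturalD[OF assms(2)] q by simp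
  have inv_IH: "inv2 B ?F' = (?Ja \<star> \<iota> ?Pq) \<odot> inv2 B ?F"
    using inv2_eq_vc_inv2[OF _ _ _ IH] assms q by simp
  have interchange: "(\<iota> (st1 B ?g) \<star> inv2 B ?F') \<odot> (st2 B ?Ja \<star> \<iota> ?Pr) =
      (st2 B ?Ja \<star> (?Ja \<star> \<iota> ?Pq)) \<odot> (\<iota> (st1 B ?f) \<star> inv2 B ?F)"
    unfolding inv_IH using assms q q' r by (simp add: vc_hc2)
  have nat_aa: "inv2 B (aa B (st1 B ?g) ?g ?Pq) \<odot> (st2 B ?Ja \<star> (?Ja \<star> \<iota> ?Pq)) =
      ((st2 B ?Ja \<star> ?Ja) \<star> \<iota> ?Pq) \<odot> inv2 B (aa B (st1 B ?f) ?f ?Pq)"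
    using aa_inv2_nat[of "\<iota> ?Pq" ?Ja "st2 B ?Ja"] assms q by simp
  have nat_ee: "(ee B ?g \<star> \<iota> ?Pq) \<odot> ((st2 B ?Ja \<star> ?Ja) \<star> \<iota> ?Pq) = ee B ?f \<star> \<iota> ?Pq"
    using ee_nat[of ?Ja] assms q by (simp add: vc_hc2)
  have "reduce2 A (FS (tcod B a)) r \<odot> (st2 B ?Ja \<star> \<iota> ?Pr) =
      ll B ?Pq \<odot> ((ee B ?g \<star> \<iota> ?Pq) \<odot> (inv2 B (aa B (st1 B ?g) ?g ?Pq) \<odot>
        ((\<iota> (st1 B ?g) \<star> inv2 B ?F') \<odot> (st2 B ?Ja \<star> \<iota> ?Pr))))"
    using assms q q' r by (simp add: vc_assoc[symmetric])
  also have "\<dots> = ll B ?Pq \<odot> ((ee B ?g \<star> \<iota> ?Pq) \<odot> ((inv2 B (aa B (st1 B ?g) ?g ?Pq) \<odot>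
      (st2 B ?Ja \<star> (?Ja \<star> \<iota> ?Pq))) \<odot> (\<iota> (st1 B ?f) \<star> inv2 B ?F)))"
    unfolding interchange using assms q q' r by (simp add: vc_assoc)
  also have "\<dots> = ll B ?Pq \<odot> (((ee B ?g \<star> \<iota> ?Pq) \<odot> ((st2 B ?Ja \<star> ?Ja) \<star> \<iota> ?Pq)) \<odot>
      (inv2 B (aa B (st1 B ?f) ?f ?Pq) \<odot> (\<iota> (st1 B ?f) \<star> inv2 B ?F)))"
    unfolding nat_aa using assms q q' r by (simp add: vc_assoc)
  also have "\<dots> = reduce2 A (FS (tdom B a)) r"
    unfolding nat_ee using assms q q' r by simp
  finally show "reduce2 A (tcod B (TS a)) r \<odot> (J2 B (TS a) \<star> \<iota> ?Pr) = reduce2 A (tdom B (TS a)) r"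
    by simp
qed

lemma reduce2_natural_J2: "twf B a \<Longrightarrow> reduce2_natural a"
proof (induction a)
  case (TId w)
  then show ?case by (simp add: reduce2_natural_def)
next
  case (TV b a)
  then show ?case by (simp add: reduce2_natural_TV)
next
  case (TInv a)
  then show ?case by (simp add: reduce2_natural_TInv)
next
  case (TH b a)
  then show ?case by (simp add: reduce2_natural_TH)
next
  case (TS a)
  then show ?case by (simp add: reduce2_natural_TS)
next
  case (TA h g f)
  then show ?case by (auto simp: reduce2_natural_def simp del: reduce2.simps intro!: reduce2_aa)
next
  case (TL f)
  then show ?case by (auto simp: reduce2_natural_def simp del: reduce2.simps intro!: reduce2_ll)
next
  case (TR f)
  then show ?case by (auto simp: reduce2_natural_def simp del: reduce2.simps intro!: reduce2_rr)
next
  case (TE f)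
  then show ?case by (auto simp: reduce2_natural_def simp del: reduce2.simps intro!: reduce2_ee)
next
  case (TIo f)
  then show ?case by (auto simp: reduce2_natural_def simp del: reduce2.simps intro!: reduce2_ii)
qed

end

theorem theoremB11:
  fixes B :: "('o, 'b, 'c) bigrp" and \<alpha> \<beta> :: "('o, 'b) ft"
  assumes "bigroupoid B"
    and "twf B \<alpha>" and "twf B \<beta>"
    and "tdom B \<alpha> = tdom B \<beta>" and "tcod B \<alpha> = tcod B \<beta>"
  shows "J2 B \<alpha> = J2 B \<beta>"
proof -
  interpret bigroupoid B by fact
  let ?A = "fsrc B (tdom B \<alpha>)"
  let ?u = "\<iota> (id1 B ?A)" and ?R = "reduce2 ?A (tcod B \<alpha>) []"
  have r: "reduced_path B ?A []" "path_tgt B ?A [] = ?A"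
    using assms by auto
  have "?R \<odot> (J2 B \<alpha> \<star> ?u) = ?R \<odot> (J2 B \<beta> \<star> ?u)"
    using reduce2_naturalD[OF reduce2_natural_J2, of \<alpha> ?A "[]"]
      reduce2_naturalD[OF reduce2_natural_J2, of \<beta> ?A "[]"] assms r by simp
  then have "J2 B \<alpha> \<star> ?u = J2 B \<beta> \<star> ?u"
    by (rule iso_cancel_left[rotated 5]) (use assms r in simp_all)
  then show ?thesis
    using id1_whisker_right_inj[of "J2 B \<alpha>" "J2 B \<beta>"] assms by simp
qed

end
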